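(* If $\mu>-3$ and $|\nu|<\mu+3$, then the function $x\mapsto x\tilde{t}_{\mu,\nu}'(x)/\tilde{t}_{\mu,\nu}(x)$ is strictly increasing on $(0,\infty)$.
   Context: For real $\mu,\nu$ the (normalized) modified Lommel function of the first kind is $$\tilde{t}_{\mu,\nu}(x)=\sum_{k=0}^\infty\frac{(\frac{1}{2}x)^{\mu+2k+1}}{\Gamma\big(k+\frac{\mu-\nu+3}{2}\big)\Gamma\big(k+\frac{\mu+\nu+3}{2}\big)},\quad x>0.$$ *)

theory Defs
  imports "HOL-Analysis.Analysis"
begin

definition lommel_t :: "real \<Rightarrow> real \<Rightarrow> real \<Rightarrow> real" where
  "lommel_t \<mu> \<nu> x =
     (\<Sum>k. (x / 2) powr (\<mu> + 2 * real k + 1) /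
           (Gamma (real k + (\<mu> - \<nu> + 3) / 2) * Gamma (real k + (\<mu> + \<nu> + 3) / 2)))"

end

theory Submission
  imports Defs "HOL-Real_Asymp.Real_Asymp"
begin

(* For x > 0, t(x) = (x/2)^(mu+1) P((x/2)^2), where P(s) = sum c_n s^n is entire with positive
   coefficients c_n = 1 / (Gamma(n + a) Gamma(n + b)), a, b = (mu -+ nu + 3)/2 > 0.  Hence
   x t'(x) / t(x) = mu + 1 + 2 s P'(s) / P(s) with s = (x/2)^2, and s P'(s) / P(s) is the mean of n
   under the weights c_n s^n.  This mean increases strictly with s (a Chebyshev sum argument):
   if m is the mean at y and r = z/y > 1, the series sum c_n y^n (n - m) (r^n - r^m) has
   nonnegative terms, a positive first term, and sum n c_n z^n - m sum c_n z^n as its value. *)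

definition powser_mean :: "(nat \<Rightarrow> real) \<Rightarrow> real \<Rightarrow> real" where
  "powser_mean c y = (\<Sum>n. real n * c n * y ^ n) / (\<Sum>n. c n * y ^ n)"

lemma Gamma_mult_Gamma_Suc:
  fixes a b :: real
  assumes "a > 0" "b > 0"
  shows "Gamma (real (Suc n) + a) * Gamma (real (Suc n) + b)
       = (real n + a) * (real n + b) * (Gamma (real n + a) * Gamma (real n + b))"
proof -
  have "Gamma (real (Suc n) + d) = (real n + d) * Gamma (real n + d)" if "d > 0" for d :: real
  proof -
    have "real n + d \<notin> \<int>\<^sub>\<le>\<^sub>0"
      using that nonpos_Ints_nonpos by fastforce
    then show ?thesis
      using Gamma_plus1[of "real n + d"] by (simp add: algebra_simps)
  qed
  then show ?thesis
    using assms by simp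
qed

lemma conv_radius_inverse_Gamma_mult:
  fixes a b :: real
  assumes "a > 0" "b > 0"
  shows "conv_radius (\<lambda>n. inverse (Gamma (real n + a) * Gamma (real n + b))) = \<infinity>"
proof (rule conv_radius_ratio_limit_ereal)
  have Gamma_mult_pos: "Gamma (real n + a) * Gamma (real n + b) > 0" for n
    using assms by simp
  then show "\<forall>\<^sub>F n in sequentially. inverse (Gamma (real n + a) * Gamma (real n + b)) \<noteq> 0"
    by (intro always_eventually allI) (metis inverse_zero_imp_zero less_irrefl)
  have inverse_ratio: "norm (inverse g) / norm (inverse (k * g)) = k"
    if "g > 0" "k > 0" for g k :: real
    using that by (simp add: divide_inverse)
  have "filterlim (\<lambda>n. (real n + a) * (real n + b)) at_top sequentially"
    using assms by real_asymp
  moreover have "norm (inverse (Gamma (real n + a) * Gamma (real n + b)))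
      / norm (inverse (Gamma (real (Suc n) + a) * Gamma (real (Suc n) + b)))
      = (real n + a) * (real n + b)" for n
    unfolding Gamma_mult_Gamma_Suc[OF assms] using Gamma_mult_pos[of n] assms
    by (intro inverse_ratio) auto
  ultimately show "(\<lambda>n. ereal (norm (inverse (Gamma (real n + a) * Gamma (real n + b)))
      / norm (inverse (Gamma (real (Suc n) + a) * Gamma (real (Suc n) + b))))) \<longlonglongrightarrow> \<infinity>"
    by (simp add: tendsto_PInfty_eq_at_top)
qed

lemma sums_index_times_powser:
  fixes c :: "nat \<Rightarrow> real"
  assumes "\<And>y. summable (\<lambda>n. c n * y ^ n)"
  shows "(\<lambda>n. real n * c n * y ^ n) sums (y * (\<Sum>n. diffs c n * y ^ n))"
proof -
  have "(\<lambda>n. y * (diffs c n * y ^ n)) sums (y * (\<Sum>n. diffs c n * y ^ n))"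
    by (intro sums_mult summable_sums termdiff_converges_all assms)
  then have "(\<lambda>n. real (Suc n) * c (Suc n) * y ^ Suc n) sums (y * (\<Sum>n. diffs c n * y ^ n))"
    by (simp add: diffs_def algebra_simps)
  then show ?thesis
    using sums_Suc_iff[of "\<lambda>n. real n * c n * y ^ n"] by simp
qed

lemma diff_mult_powr_diff_nonneg:
  fixes r s t :: real
  assumes "r > 1"
  shows "0 \<le> (s - t) * (r powr s - r powr t)"
  using assms by (cases "s \<le> t") (auto intro!: mult_nonneg_nonneg mult_nonpos_nonpos)

lemma powser_mean_less:
  fixes c :: "nat \<Rightarrow> real"
  assumes pos: "\<And>n. c n > 0" and summable: "\<And>y. summable (\<lambda>n. c n * y ^ n)"
    and "0 < y" "y < z"
  shows "powser_mean c y < powser_mean c z"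
proof -
  define N where "N w = (\<Sum>n. real n * c n * w ^ n)" for w
  define D where "D w = (\<Sum>n. c n * w ^ n)" for w
  define m where "m = powser_mean c y"
  define r where "r = z / y"
  have r: "r > 1" "z = r * y"
    using \<open>0 < y\<close> \<open>y < z\<close> by (simp_all add: r_def)
  have sums_N: "(\<lambda>n. real n * c n * w ^ n) sums N w" for w
    unfolding N_def using sums_index_times_powser[OF summable] by (simp add: sums_iff)
  have sums_D: "(\<lambda>n. c n * w ^ n) sums D w" for w
    unfolding D_def using summable by (rule summable_sums)
  have D_pos: "D w > 0" if "w > 0" for w
    unfolding D_def using summable pos that
    by (intro suminf_pos2[where i = 0]) (auto intro: less_imp_le)
  have "N y > 0"
    unfolding N_def using sums_summable[OF sums_N] pos \<open>0 < y\<close>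
    by (intro suminf_pos2[where i = 1]) (simp_all add: less_imp_le)
  then have "m > 0" and m: "N y - m * D y = 0"
    using D_pos[OF \<open>0 < y\<close>] by (simp_all add: m_def powser_mean_def N_def D_def)
  define f where "f n = c n * y ^ n * ((real n - m) * (r powr real n - r powr m))" for n
  have "f = (\<lambda>n. (real n * c n * z ^ n - m * (c n * z ^ n))
      - r powr m * (real n * c n * y ^ n - m * (c n * y ^ n)))"
    using r by (auto simp: f_def powr_realpow power_mult_distrib algebra_simps)
  then have "f sums ((N z - m * D z) - r powr m * (N y - m * D y))"
    by (simp only: sums_diff sums_mult sums_N sums_D)
  then have f_sums: "f sums (N z - m * D z)"
    by (simp add: m)
  have "f n \<ge> 0" for n
    unfolding f_def using pos[of n] \<open>0 < y\<close>
    by (intro mult_nonneg_nonneg[OF _ diff_mult_powr_diff_nonneg[OF \<open>r > 1\<close>]]) simp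
  moreover have "f 0 > 0"
    using pos[of 0] \<open>m > 0\<close> \<open>r > 1\<close> gr_one_powr[OF \<open>r > 1\<close> \<open>m > 0\<close>]
    by (simp add: f_def mult_pos_neg)
  ultimately have "N z - m * D z > 0"
    using suminf_pos2[OF sums_summable[OF f_sums]] sums_unique[OF f_sums] by simp
  moreover have "powser_mean c z = N z / D z"
    unfolding powser_mean_def N_def D_def ..
  ultimately show ?thesis
    using D_pos[of z] \<open>0 < y\<close> \<open>y < z\<close> unfolding m_def[symmetric]
    by (simp add: pos_less_divide_eq)
qed

lemma scaled_powser_log_deriv:
  fixes c :: "nat \<Rightarrow> real" and \<mu> :: real
  assumes summable: "\<And>y. summable (\<lambda>n. c n * y ^ n)"
    and "x > 0" and nonzero: "(\<Sum>n. c n * ((x / 2)\<^sup>2) ^ n) \<noteq> 0"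
  defines "f \<equiv> \<lambda>x. (x / 2) powr (\<mu> + 1) * (\<Sum>n. c n * ((x / 2)\<^sup>2) ^ n)"
  shows "x * deriv f x / f x = \<mu> + 1 + 2 * powser_mean c ((x / 2)\<^sup>2)"
proof -
  define P where "P s = (\<Sum>n. c n * s ^ n)" for s
  define P' where "P' s = (\<Sum>n. diffs c n * s ^ n)" for s
  define s where "s = (x / 2)\<^sup>2"
  have "((\<lambda>x. (x / 2) powr (\<mu> + 1)) has_real_derivative (\<mu> + 1) * (x / 2) powr \<mu> / 2) (at x)"
    using \<open>x > 0\<close> by (auto intro!: derivative_eq_intros)
  moreover have "((\<lambda>x. P ((x / 2)\<^sup>2)) has_real_derivative P' s * (x / 2)) (at x)"
    unfolding s_def
    by (rule DERIV_chain2[where f = P, OF termdiffs_strong_converges_everywhere[OF summable,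
          folded P_def P'_def]]) (auto intro!: derivative_eq_intros simp: power2_eq_square)
  ultimately have "(f has_real_derivative
      (\<mu> + 1) * (x / 2) powr \<mu> / 2 * P s + P' s * (x / 2) * (x / 2) powr (\<mu> + 1)) (at x)"
    unfolding f_def P_def[symmetric] s_def by (rule DERIV_mult)
  then have "x * deriv f x / f x
      = x * ((\<mu> + 1) * (x / 2) powr \<mu> / 2 * P s + P' s * (x / 2) * ((x / 2) powr \<mu> * (x / 2)))
        / ((x / 2) powr \<mu> * (x / 2) * P s)"
    using \<open>x > 0\<close> by (simp add: DERIV_imp_deriv f_def P_def s_def powr_add)
  also have "\<dots> = \<mu> + 1 + 2 * (s * P' s) / P s"
    using \<open>x > 0\<close> nonzero by (simp add: P_def s_def field_simps power2_eq_square)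
  also have "s * P' s = (\<Sum>n. real n * c n * s ^ n)"
    unfolding P'_def using sums_index_times_powser[OF summable] by (simp add: sums_iff)
  finally show ?thesis
    by (simp add: powser_mean_def P_def s_def)
qed

definition lommel_coeff :: "real \<Rightarrow> real \<Rightarrow> nat \<Rightarrow> real" where
  "lommel_coeff \<mu> \<nu> n =
     inverse (Gamma (real n + (\<mu> - \<nu> + 3) / 2) * Gamma (real n + (\<mu> + \<nu> + 3) / 2))"

lemma lommel_coeff_pos:
  assumes "\<bar>\<nu>\<bar> < \<mu> + 3"
  shows "lommel_coeff \<mu> \<nu> n > 0"
proof -
  have "real n + (\<mu> - \<nu> + 3) / 2 > 0" "real n + (\<mu> + \<nu> + 3) / 2 > 0"
    using assms by (auto simp: abs_less_iff intro!: add_nonneg_pos)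
  then show ?thesis
    by (simp add: lommel_coeff_def)
qed

lemma summable_lommel_coeff_powser:
  assumes "\<bar>\<nu>\<bar> < \<mu> + 3"
  shows "summable (\<lambda>n. lommel_coeff \<mu> \<nu> n * y ^ n)"
proof -
  have "conv_radius (lommel_coeff \<mu> \<nu>) = \<infinity>"
    unfolding lommel_coeff_def[abs_def] using assms by (intro conv_radius_inverse_Gamma_mult) auto
  then show ?thesis
    by (intro summable_in_conv_radius) simp
qed

lemma lommel_t_eq_scaled_powser:
  assumes "\<bar>\<nu>\<bar> < \<mu> + 3" "x > 0"
  shows "lommel_t \<mu> \<nu> x = (x / 2) powr (\<mu> + 1) * (\<Sum>n. lommel_coeff \<mu> \<nu> n * ((x / 2)\<^sup>2) ^ n)"
proof -
  have powr_eq: "(x / 2) powr (\<mu> + 2 * real n + 1) = (x / 2) powr (\<mu> + 1) * ((x / 2)\<^sup>2) ^ n" for n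
    using \<open>x > 0\<close> powr_realpow[of "x / 2" "2 * n"] by (simp add: powr_add flip: power_mult)
  have "lommel_t \<mu> \<nu> x = (\<Sum>n. (x / 2) powr (\<mu> + 1) * (lommel_coeff \<mu> \<nu> n * ((x / 2)\<^sup>2) ^ n))"
    unfolding lommel_t_def
  proof (rule suminf_cong)
    fix n
    show "(x / 2) powr (\<mu> + 2 * real n + 1)
        / (Gamma (real n + (\<mu> - \<nu> + 3) / 2) * Gamma (real n + (\<mu> + \<nu> + 3) / 2))
        = (x / 2) powr (\<mu> + 1) * (lommel_coeff \<mu> \<nu> n * ((x / 2)\<^sup>2) ^ n)"
      unfolding powr_eq lommel_coeff_def by (simp only: divide_inverse mult_ac)
  qed
  then show ?thesis
    using suminf_mult[OF summable_lommel_coeff_powser[OF assms(1)]] by simp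
qed

lemma lommel_t_log_deriv:
  assumes "\<bar>\<nu>\<bar> < \<mu> + 3" "x > 0"
  shows "x * deriv (lommel_t \<mu> \<nu>) x / lommel_t \<mu> \<nu> x
       = \<mu> + 1 + 2 * powser_mean (lommel_coeff \<mu> \<nu>) ((x / 2)\<^sup>2)"
proof -
  have "\<forall>\<^sub>F y in nhds x. y > 0"
    using eventually_nhds_in_open[OF open_greaterThan, of x 0] \<open>x > 0\<close> by simp
  then have "\<forall>\<^sub>F y in nhds x. lommel_t \<mu> \<nu> y
      = (y / 2) powr (\<mu> + 1) * (\<Sum>n. lommel_coeff \<mu> \<nu> n * ((y / 2)\<^sup>2) ^ n)"
    by eventually_elim (rule lommel_t_eq_scaled_powser[OF assms(1)])
  then have "deriv (lommel_t \<mu> \<nu>) x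
      = deriv (\<lambda>y. (y / 2) powr (\<mu> + 1) * (\<Sum>n. lommel_coeff \<mu> \<nu> n * ((y / 2)\<^sup>2) ^ n)) x"
    by (rule deriv_cong_ev) simp
  moreover have "(\<Sum>n. lommel_coeff \<mu> \<nu> n * ((x / 2)\<^sup>2) ^ n) > 0"
    using assms lommel_coeff_pos summable_lommel_coeff_powser
    by (intro suminf_pos2[where i = 0]) (auto intro: less_imp_le)
  ultimately show ?thesis
    using scaled_powser_log_deriv[OF summable_lommel_coeff_powser[OF assms(1)] \<open>x > 0\<close>]
    by (simp add: lommel_t_eq_scaled_powser[OF assms])
qed

theorem theorem3p2:
  fixes \<mu> \<nu> :: real
  assumes "\<mu> > -3" and "\<bar>\<nu>\<bar> < \<mu> + 3"
  shows "strict_mono_on {0<..} (\<lambda>x. x * deriv (lommel_t \<mu> \<nu>) x / lommel_t \<mu> \<nu> x)"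
proof (rule strict_mono_onI)
  fix x y :: real
  assume "x \<in> {0<..}" "y \<in> {0<..}" "x < y"
  then have "0 < (x / 2)\<^sup>2" "(x / 2)\<^sup>2 < (y / 2)\<^sup>2"
    by (auto intro: power_strict_mono)
  then have "powser_mean (lommel_coeff \<mu> \<nu>) ((x / 2)\<^sup>2) < powser_mean (lommel_coeff \<mu> \<nu>) ((y / 2)\<^sup>2)"
    using assms(2) lommel_coeff_pos summable_lommel_coeff_powser by (intro powser_mean_less)
  then show "x * deriv (lommel_t \<mu> \<nu>) x / lommel_t \<mu> \<nu> x < y * deriv (lommel_t \<mu> \<nu>) y / lommel_t \<mu> \<nu> y"
    using \<open>x \<in> {0<..}\<close> \<open>y \<in> {0<..}\<close> by (simp add: lommel_t_log_deriv[OF assms(2)])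
qed

end
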